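(* Let $n\ge1$, $m\ge0$, and let $\mathfrak{g}\subseteq\mathfrak{gl}(2n+m)$ be the seaweed of type $\frac{2n+m}{n|m|n}$, i.e. the algebra of block lower-triangular matrices with respect to diagonal blocks of sizes $n,m,n$ (so $X_{i,j}=0$ whenever $i\le n<j$, or $i\le n+m<j$). Let $F=\sum_{i,j=1}^n p_{i,j}e_{i,j}^*\in\mathfrak{gl}(n)^*$ and $G=\sum_{i,j=1}^m q_{i,j}e_{i,j}^*\in\mathfrak{gl}(m)^*$ be arbitrary. Define $\Phi,\Phi^a\in\mathfrak{g}^*$ by $$\Phi=\sum_{i,j=1}^np_{i,j}e_{i,j}^*+\sum_{i,j=1}^mq_{i,j}e_{n+i,n+j}^*+\sum_{i,j=1}^np_{i,j}e_{n+m+i,n+m+j}^*+\sum_{i=1}^ne_{n+m+i,i}^*,$$ $$\Phi^a=\sum_{i,j=1}^np_{i,j}e_{i,j}^*+\sum_{i,j=1}^mq_{i,j}e_{n+i,n+j}^*+\sum_{i,j=1}^np_{i,j}e_{2n+m+1-i,2n+m+1-j}^*+\sum_{i=1}^ne_{2n+m+1-i,i}^*.$$ Then $\ker(B_\Phi)=\{X\oplus Y\oplus X: X\in\ker(B_F),\ Y\in\ker(B_G)\}$ and $\ker(B_{\Phi^a})=\{X\oplus Y\oplus X^R: X\in\ker(B_F),\ Y\in\ker(B_G)\}$, where $X^R=A_nXA_n$ with $A_n=\sum_{i=1}^ne_{i,n+1-i}$ (i.e. $(X^R)_{i,j}=X_{n+1-i,n+1-j}$). In particular $$\dim\ker(B_\Phi)=\dim\ker(B_{\Phi^a})=\dim\ker(B_F)+\dim\ker(B_G),$$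 where $\ker(B_F)$ is computed in $\mathfrak{gl}(n)$ and $\ker(B_G)$ in $\mathfrak{gl}(m)$.
   Context: Over $\mathbb{C}$. $e_{i,j}^*(X)=X_{i,j}$. For a Lie algebra $\mathfrak{h}$ and $f\in\mathfrak{h}^*$, $B_f(x,y)=f([x,y])$ and $\ker(B_f)=\{x\in\mathfrak{h}: f([x,y])=0\ \forall y\in\mathfrak{h}\}$. $X\oplus Y\oplus Z$ denotes the block-diagonal matrix with diagonal blocks $X,Y,Z$. When $m=0$ the middle block and $G$ are absent and $\dim\ker(B_G)=0$. *)

theory Defs
  imports Complex_Main "HOL-Library.Function_Algebras"
begin

text \<open>Square complex matrices of size N are represented as functions
  nat \<Rightarrow> nat \<Rightarrow> complex, indexed 1-based by 1..N and vanishing outside.\<close>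

type_synonym cmat = "nat \<Rightarrow> nat \<Rightarrow> complex"

definition gl :: "nat \<Rightarrow> cmat set" where
  "gl N = {X. \<forall>i j. (i \<notin> {1..N} \<or> j \<notin> {1..N}) \<longrightarrow> X i j = 0}"

definition mmul :: "nat \<Rightarrow> cmat \<Rightarrow> cmat \<Rightarrow> cmat" where
  "mmul N X Y = (\<lambda>i j. \<Sum>k=1..N. X i k * Y k j)"

definition br :: "nat \<Rightarrow> cmat \<Rightarrow> cmat \<Rightarrow> cmat" where
  "br N X Y = mmul N X Y - mmul N Y X"

text \<open>The linear functional \<open>\<Sum> c i j e_{i,j}^*\<close> on gl(N), given by its coefficient matrix c.\<close>
definition lf :: "nat \<Rightarrow> cmat \<Rightarrow> cmat \<Rightarrow> complex" where
  "lf N c X = (\<Sum>i=1..N. \<Sum>j=1..N. c i j * X i j)"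

definition kerB :: "nat \<Rightarrow> cmat set \<Rightarrow> cmat \<Rightarrow> cmat set" where
  "kerB N h c = {x \<in> h. \<forall>y\<in>h. lf N c (br N x y) = 0}"

definition seaweed :: "nat \<Rightarrow> nat \<Rightarrow> cmat set" where
  "seaweed n m = {X \<in> gl (2*n+m). \<forall>i j.
     ((i \<le> n \<and> n < j) \<or> (i \<le> n+m \<and> n+m < j)) \<longrightarrow> X i j = 0}"

definition estar :: "nat \<Rightarrow> nat \<Rightarrow> cmat" where
  "estar a b = (\<lambda>i j. if i = a \<and> j = b then 1 else 0)"

definition Phi :: "nat \<Rightarrow> nat \<Rightarrow> cmat \<Rightarrow> cmat \<Rightarrow> cmat" where
  "Phi n m p q =
     (\<Sum>i=1..n. \<Sum>j=1..n. (\<lambda>a b. p i j * estar i j a b))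
   + (\<Sum>i=1..m. \<Sum>j=1..m. (\<lambda>a b. q i j * estar (n+i) (n+j) a b))
   + (\<Sum>i=1..n. \<Sum>j=1..n. (\<lambda>a b. p i j * estar (n+m+i) (n+m+j) a b))
   + (\<Sum>i=1..n. estar (n+m+i) i)"

definition Phi_a :: "nat \<Rightarrow> nat \<Rightarrow> cmat \<Rightarrow> cmat \<Rightarrow> cmat" where
  "Phi_a n m p q =
     (\<Sum>i=1..n. \<Sum>j=1..n. (\<lambda>a b. p i j * estar i j a b))
   + (\<Sum>i=1..m. \<Sum>j=1..m. (\<lambda>a b. q i j * estar (n+i) (n+j) a b))
   + (\<Sum>i=1..n. \<Sum>j=1..n. (\<lambda>a b. p i j * estar (2*n+m+1-i) (2*n+m+1-j) a b))
   + (\<Sum>i=1..n. estar (2*n+m+1-i) i)"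

definition blockdiag :: "nat \<Rightarrow> nat \<Rightarrow> cmat \<Rightarrow> cmat \<Rightarrow> cmat \<Rightarrow> cmat" where
  "blockdiag n m X Y Z = (\<lambda>i j.
     if i \<in> {1..n} \<and> j \<in> {1..n} then X i j
     else if i \<in> {n+1..n+m} \<and> j \<in> {n+1..n+m} then Y (i-n) (j-n)
     else if i \<in> {n+m+1..2*n+m} \<and> j \<in> {n+m+1..2*n+m} then Z (i-n-m) (j-n-m)
     else 0)"

definition revm :: "nat \<Rightarrow> cmat \<Rightarrow> cmat" where
  "revm n X = (\<lambda>i j. if i \<in> {1..n} \<and> j \<in> {1..n} then X (n+1-i) (n+1-j) else 0)"

definition cdim :: "cmat set \<Rightarrow> nat" where
  "cdim S = vector_space.dim (\<lambda>(c::complex) (X::cmat). (\<lambda>i j. c * X i j)) S"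

end

(*
  For Z in the seaweed, Phi([Z, e_ab]) is the (a,b) entry of an explicit matrix coad Phi Z, so
  Z lies in ker B_Phi iff that matrix vanishes at every position allowed in the seaweed.
  Phi and Phi^a differ only in the bijection rho matching the third diagonal block with the
  first, so both are handled by one locale.  The equations at positions (2,1) and (3,2) kill
  the blocks (3,2) and (2,1) of Z; those at (3,1) say that the (3,3) block is the rho-transport
  of the (1,1) block; and adding resp. subtracting the equations at (a,b) and (rho a, rho b)
  shows that the (3,1) block vanishes and the (1,1) block lies in ker B_F.  The middle block
  satisfies exactly the equations of ker B_G.  Finally Z = X + Y + X' is the image of
  ker B_F x ker B_G under an injective linear map, which gives the dimension formula.
*)

theory Submission
  imports Defs
begin

abbreviation cscale :: "complex \<Rightarrow> cmat \<Rightarrow> cmat" where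
  "cscale c X \<equiv> (\<lambda>i j. c * X i j)"

interpretation cmat: vector_space cscale
  by unfold_locales (auto simp: fun_eq_iff algebra_simps)

lemma cdim_eq_dim: "cdim S = cmat.dim S"
  by (simp add: cdim_def)

lemma cmat_linearI:
  assumes "\<And>X X'. L (X + X') = L X + L X'" and "\<And>c X. L (cscale c X) = cscale c (L X)"
  shows "Vector_Spaces.linear cscale cscale L"
  using assms cmat.vector_space_axioms by (simp add: Vector_Spaces.linear_iff)

lemma sum_fun_apply: "(\<Sum>i\<in>S. f i) x = (\<Sum>i\<in>S. f i x)"
  by (induction S rule: infinite_finite_induct) auto

definition coad :: "nat \<Rightarrow> cmat \<Rightarrow> cmat \<Rightarrow> cmat" where
  "coad N c x = (\<lambda>a b. (\<Sum>i=1..N. c i b * x i a) - (\<Sum>j=1..N. c a j * x b j))"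

lemma lf_br_eq_lf_coad: "lf N c (br N x y) = lf N (coad N c x) y"
proof -
  have xy: "lf N c (mmul N x y) = (\<Sum>a=1..N. \<Sum>b=1..N. (\<Sum>i=1..N. c i b * x i a) * y a b)"
  proof -
    have "lf N c (mmul N x y) = (\<Sum>i=1..N. \<Sum>b=1..N. \<Sum>a=1..N. c i b * x i a * y a b)"
      by (simp add: lf_def mmul_def sum_distrib_left mult_ac)
    also have "\<dots> = (\<Sum>i=1..N. \<Sum>a=1..N. \<Sum>b=1..N. c i b * x i a * y a b)"
      by (rule sum.cong[OF refl], rule sum.swap)
    also have "\<dots> = (\<Sum>a=1..N. \<Sum>i=1..N. \<Sum>b=1..N. c i b * x i a * y a b)"
      by (rule sum.swap)
    also have "\<dots> = (\<Sum>a=1..N. \<Sum>b=1..N. \<Sum>i=1..N. c i b * x i a * y a b)"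
      by (rule sum.cong[OF refl], rule sum.swap)
    finally show ?thesis by (simp add: sum_distrib_right)
  qed
  have yx: "lf N c (mmul N y x) = (\<Sum>a=1..N. \<Sum>b=1..N. (\<Sum>j=1..N. c a j * x b j) * y a b)"
  proof -
    have "lf N c (mmul N y x) = (\<Sum>a=1..N. \<Sum>j=1..N. \<Sum>b=1..N. c a j * x b j * y a b)"
      by (simp add: lf_def mmul_def sum_distrib_left mult_ac)
    also have "\<dots> = (\<Sum>a=1..N. \<Sum>b=1..N. \<Sum>j=1..N. c a j * x b j * y a b)"
      by (rule sum.cong[OF refl], rule sum.swap)
    finally show ?thesis by (simp add: sum_distrib_right)
  qed
  have "lf N c (br N x y) = lf N c (mmul N x y) - lf N c (mmul N y x)"
    by (simp add: br_def lf_def right_diff_distrib sum_subtractf)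
  also have "\<dots> = lf N (coad N c x) y"
    unfolding xy yx by (simp add: lf_def coad_def left_diff_distrib sum_subtractf)
  finally show ?thesis .
qed

lemma coad_add_right: "coad N c (x + y) a b = coad N c x a b + coad N c y a b"
  by (simp add: coad_def distrib_left sum.distrib)

lemma coad_scale_right: "coad N c (cscale k x) a b = k * coad N c x a b"
  by (simp add: coad_def sum_distrib_left right_diff_distrib mult_ac)

lemma coad_add: "coad N (c + d) x a b = coad N c x a b + coad N d x a b"
  by (simp add: coad_def distrib_right sum.distrib)

lemma coad_sum: "coad N (\<Sum>i\<in>S. f i) x a b = (\<Sum>i\<in>S. coad N (f i) x a b)"
  by (simp add: coad_def sum_fun_apply sum_distrib_right sum_subtractf flip: sum.swap[of _ S])

lemma coad_scale: "coad N (cscale k c) x a b = k * coad N c x a b"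
  by (simp add: coad_def sum_distrib_left right_diff_distrib mult_ac)

lemma coad_estar:
  "\<alpha> \<in> {1..N} \<Longrightarrow> \<beta> \<in> {1..N} \<Longrightarrow>
   coad N (estar \<alpha> \<beta>) x a b = (if b = \<beta> then x \<alpha> a else 0) - (if a = \<alpha> then x b \<beta> else 0)"
  by (simp add: coad_def estar_def if_distrib[of "\<lambda>t. t * _"] sum.delta cong: if_cong)

definition vanishing_on :: "nat \<Rightarrow> (nat \<Rightarrow> nat \<Rightarrow> bool) \<Rightarrow> cmat set" where
  "vanishing_on N P = {X \<in> gl N. \<forall>i j. P i j \<longrightarrow> X i j = 0}"

lemma gl_eq_vanishing_on: "gl N = vanishing_on N (\<lambda>_ _. False)"
  by (simp add: vanishing_on_def)

lemma seaweed_eq_vanishing_on: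
  "seaweed n m = vanishing_on (2*n+m) (\<lambda>i j. (i \<le> n \<and> n < j) \<or> (i \<le> n+m \<and> n+m < j))"
  by (simp add: seaweed_def vanishing_on_def)

lemma lf_estar: "a \<in> {1..N} \<Longrightarrow> b \<in> {1..N} \<Longrightarrow> lf N c (estar a b) = c a b"
  unfolding lf_def estar_def
  by (simp add: if_distrib[of "\<lambda>t. _ * t"] conj_commute[of "_ = a"] sum.delta flip: if_if_eq_conj cong: if_cong)

lemma kerB_vanishing_on:
  "kerB N (vanishing_on N P) c =
     {x \<in> vanishing_on N P. \<forall>a\<in>{1..N}. \<forall>b\<in>{1..N}. \<not> P a b \<longrightarrow> coad N c x a b = 0}"
proof (intro set_eqI iffI)
  fix x assume "x \<in> kerB N (vanishing_on N P) c"
  then have x: "x \<in> vanishing_on N P" and ker: "\<And>y. y \<in> vanishing_on N P \<Longrightarrow> lf N (coad N c x) y = 0"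
    by (auto simp: kerB_def lf_br_eq_lf_coad)
  have "coad N c x a b = 0" if "a \<in> {1..N}" "b \<in> {1..N}" "\<not> P a b" for a b
  proof -
    have "estar a b \<in> vanishing_on N P"
      using that by (auto simp: vanishing_on_def gl_def estar_def)
    then show ?thesis
      using ker lf_estar that by metis
  qed
  with x show "x \<in> {x \<in> vanishing_on N P. \<forall>a\<in>{1..N}. \<forall>b\<in>{1..N}. \<not> P a b \<longrightarrow> coad N c x a b = 0}"
    by blast
next
  fix x assume x: "x \<in> {x \<in> vanishing_on N P. \<forall>a\<in>{1..N}. \<forall>b\<in>{1..N}. \<not> P a b \<longrightarrow> coad N c x a b = 0}"
  have "lf N (coad N c x) y = 0" if y: "y \<in> vanishing_on N P" for y
  proof -
    have "coad N c x a b * y a b = 0" if "a \<in> {1..N}" "b \<in> {1..N}" for a b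
      using x y that by (cases "P a b") (auto simp: vanishing_on_def)
    then show ?thesis
      unfolding lf_def by (simp add: sum.neutral)
  qed
  with x show "x \<in> kerB N (vanishing_on N P) c"
    by (auto simp: kerB_def lf_br_eq_lf_coad)
qed

lemma kerB_gl_iff: "x \<in> kerB N (gl N) c \<longleftrightarrow> x \<in> gl N \<and> (\<forall>a\<in>{1..N}. \<forall>b\<in>{1..N}. coad N c x a b = 0)"
  by (simp add: gl_eq_vanishing_on kerB_vanishing_on)

lemma kerB_subset_gl: "kerB N (gl N) c \<subseteq> gl N"
  by (auto simp: kerB_def)

lemma gl_eqI:
  assumes "X \<in> gl N" "X' \<in> gl N" and "\<And>i j. i \<in> {1..N} \<Longrightarrow> j \<in> {1..N} \<Longrightarrow> X i j = X' i j"
  shows "X = X'"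
proof (intro ext)
  fix i j
  show "X i j = X' i j"
    using assms by (cases "i \<in> {1..N} \<and> j \<in> {1..N}") (auto simp: gl_def)
qed

lemma gl_subset_span_estar: "gl N \<subseteq> cmat.span ((\<lambda>(i, j). estar i j) ` ({1..N} \<times> {1..N}))"
proof
  fix X assume X: "X \<in> gl N"
  let ?E = "(\<lambda>(i, j). estar i j) ` ({1..N} \<times> {1..N})"
  have "X = (\<Sum>(i, j)\<in>{1..N} \<times> {1..N}. cscale (X i j) (estar i j))"
  proof (intro ext)
    fix a b
    have "(\<Sum>(i, j)\<in>{1..N} \<times> {1..N}. cscale (X i j) (estar i j)) a b
        = (\<Sum>ij\<in>{1..N} \<times> {1..N}. if ij = (a, b) then X a b else 0)"
      unfolding sum_fun_apply estar_def by (rule sum.cong) (auto split: if_splits)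
    also have "\<dots> = X a b"
      using X by (auto simp: gl_def)
    finally show "X a b = (\<Sum>(i, j)\<in>{1..N} \<times> {1..N}. cscale (X i j) (estar i j)) a b"
      by simp
  qed
  also have "\<dots> \<in> cmat.span ?E"
    by (intro cmat.span_sum) (auto intro: cmat.span_scale cmat.span_base)
  finally show "X \<in> cmat.span ?E" .
qed

lemma subspace_kerB_gl: "cmat.subspace (kerB N (gl N) c)"
  unfolding cmat.subspace_def
proof (intro conjI ballI allI)
  show "0 \<in> kerB N (gl N) c"
    by (simp add: kerB_gl_iff) (simp add: gl_def coad_def)
  show "x + y \<in> kerB N (gl N) c" if "x \<in> kerB N (gl N) c" "y \<in> kerB N (gl N) c" for x y
    using that by (simp add: kerB_gl_iff coad_add_right) (simp add: gl_def)
  show "cscale k x \<in> kerB N (gl N) c" if "x \<in> kerB N (gl N) c" for k x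
    using that by (simp add: kerB_gl_iff coad_scale_right) (simp add: gl_def)
qed

context vector_space
begin

lemma independent_Un:
  assumes A: "independent A" and B: "independent B" and disjoint: "span A \<inter> span B \<subseteq> {0}"
  shows "independent (A \<union> B)"
  unfolding independent_explicit_module
proof (intro allI impI)
  fix t u v
  assume t: "finite t" "t \<subseteq> A \<union> B" and sum0: "(\<Sum>v\<in>t. u v *s v) = 0" and v: "v \<in> t"
  let ?a = "\<Sum>v\<in>t \<inter> A. u v *s v" and ?b = "\<Sum>v\<in>t - A. u v *s v"
  have "?a \<in> span A" "?b \<in> span B"
    using t(2) by (auto intro!: span_sum span_scale intro: span_base)
  moreover have "?a + ?b = 0"
    using sum0 sum.Int_Diff[OF t(1)] by metis
  ultimately have "?a = 0" "?b = 0"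
    using disjoint span_neg[of ?b B] by (auto simp: add_eq_0_iff)
  then show "u v = 0"
    using independentD[OF A, of "t \<inter> A"] independentD[OF B, of "t - A"] t v by blast
qed

lemma dim_sum_images:
  assumes L1: "Vector_Spaces.linear scale scale L1" and L2: "Vector_Spaces.linear scale scale L2"
    and K1: "subspace K1" "K1 \<subseteq> span F1" "finite F1" and K2: "subspace K2" "K2 \<subseteq> span F2" "finite F2"
    and inj1: "inj_on L1 K1" and inj2: "inj_on L2 K2"
    and disjoint: "\<And>x y. x \<in> K1 \<Longrightarrow> y \<in> K2 \<Longrightarrow> L1 x + L2 y = 0 \<Longrightarrow> L1 x = 0"
  shows "dim {L1 x + L2 y | x y. x \<in> K1 \<and> y \<in> K2} = dim K1 + dim K2"
proof -
  interpret L1: Vector_Spaces.linear scale scale L1 by fact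
  interpret L2: Vector_Spaces.linear scale scale L2 by fact
  obtain B1 where B1: "B1 \<subseteq> K1" "independent B1" "K1 \<subseteq> span B1" "card B1 = dim K1"
    by (rule basis_exists)
  obtain B2 where B2: "B2 \<subseteq> K2" "independent B2" "K2 \<subseteq> span B2" "card B2 = dim K2"
    by (rule basis_exists)
  have span_B1: "span B1 = K1" and span_B2: "span B2 = K2"
    using span_subspace B1 B2 K1(1) K2(1) by auto
  have "finite B1" "finite B2"
    using independent_span_bound[OF K1(3) B1(2)] independent_span_bound[OF K2(3) B2(2)] B1 B2 K1 K2
    by auto
  have indep: "independent (L1 ` B1)" "independent (L2 ` B2)"
    using L1.independent_injective_image L2.independent_injective_image B1(2) B2(2) inj1 inj2
    by (simp_all add: span_B1 span_B2)
  have card: "card (L1 ` B1) = dim K1" "card (L2 ` B2) = dim K2"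
    using card_image[OF inj_on_subset[OF inj1 B1(1)]] card_image[OF inj_on_subset[OF inj2 B2(1)]] B1 B2
    by simp_all
  have span_image: "span (L1 ` B1) = L1 ` K1" "span (L2 ` B2) = L2 ` K2"
    by (simp_all add: L1.span_image L2.span_image span_B1 span_B2)
  have trivial_meet: "span (L1 ` B1) \<inter> span (L2 ` B2) \<subseteq> {0}"
  proof
    fix z assume "z \<in> span (L1 ` B1) \<inter> span (L2 ` B2)"
    then obtain x y where "x \<in> K1" "y \<in> K2" "z = L1 x" "z = L2 y"
      unfolding span_image by blast
    then have "L1 x + L2 (- y) = 0"
      by (simp add: L2.neg)
    then show "z \<in> {0}"
      using disjoint \<open>x \<in> K1\<close> \<open>y \<in> K2\<close> \<open>z = L1 x\<close> subspace_neg[OF K2(1)] by auto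
  qed
  have "{L1 x + L2 y | x y. x \<in> K1 \<and> y \<in> K2} = span (L1 ` B1 \<union> L2 ` B2)"
    unfolding span_Un span_image by auto
  also have "dim \<dots> = card (L1 ` B1 \<union> L2 ` B2)"
    using independent_Un[OF indep trivial_meet] by (rule dim_span_eq_card_independent)
  also have "\<dots> = dim K1 + dim K2"
  proof -
    have "z = 0" if "z \<in> L1 ` B1" "z \<in> L2 ` B2" for z
      using trivial_meet span_base[OF that(1)] span_base[OF that(2)] by blast
    moreover have "0 \<notin> L1 ` B1"
      using indep(1) dependent_zero by blast
    ultimately have "L1 ` B1 \<inter> L2 ` B2 = {}"
      by (metis disjoint_iff)
    with \<open>finite B1\<close> \<open>finite B2\<close> show ?thesis
      by (simp only: card_Un_disjoint finite_imageI card)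
  qed
  finally show ?thesis .
qed

end

lemma seaweed_eq_blockdiagI:
  assumes Z: "Z \<in> seaweed n m"
    and B11: "\<And>i j. i \<in> {1..n} \<Longrightarrow> j \<in> {1..n} \<Longrightarrow> Z i j = X i j"
    and B22: "\<And>i j. i \<in> {n+1..n+m} \<Longrightarrow> j \<in> {n+1..n+m} \<Longrightarrow> Z i j = Y (i-n) (j-n)"
    and B33: "\<And>i j. i \<in> {n+m+1..2*n+m} \<Longrightarrow> j \<in> {n+m+1..2*n+m} \<Longrightarrow> Z i j = W (i-n-m) (j-n-m)"
    and B21: "\<And>i j. i \<in> {n+1..n+m} \<Longrightarrow> j \<in> {1..n} \<Longrightarrow> Z i j = 0"
    and B3: "\<And>i j. i \<in> {n+m+1..2*n+m} \<Longrightarrow> j \<in> {1..n+m} \<Longrightarrow> Z i j = 0"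
  shows "Z = blockdiag n m X Y W"
proof (intro ext)
  fix i j
  have upper: "Z i j = 0" if "i \<le> n \<and> n < j \<or> i \<le> n+m \<and> n+m < j"
    using Z that by (auto simp: seaweed_def)
  consider (out) "i \<notin> {1..2*n+m} \<or> j \<notin> {1..2*n+m}"
    | (11) "i \<in> {1..n}" "j \<in> {1..n}" | (22) "i \<in> {n+1..n+m}" "j \<in> {n+1..n+m}"
    | (33) "i \<in> {n+m+1..2*n+m}" "j \<in> {n+m+1..2*n+m}"
    | (21) "i \<in> {n+1..n+m}" "j \<in> {1..n}" | (3) "i \<in> {n+m+1..2*n+m}" "j \<in> {1..n+m}"
    | (up) "i \<le> n \<and> n < j \<or> i \<le> n+m \<and> n+m < j"
    by fastforce
  then show "Z i j = blockdiag n m X Y W i j"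
  proof cases
    case out
    with Z show ?thesis by (auto simp: blockdiag_def seaweed_def gl_def)
  qed (auto simp: blockdiag_def B11 B22 B33 B21 B3 upper)
qed

lemma blockdiag_corner: "i \<in> {1..n} \<Longrightarrow> j \<in> {1..n} \<Longrightarrow> blockdiag n m X Y Z i j = X i j"
  by (simp add: blockdiag_def)

lemma blockdiag_middle: "i \<in> {1..m} \<Longrightarrow> j \<in> {1..m} \<Longrightarrow> blockdiag n m X Y Z (n+i) (n+j) = Y i j"
  by (auto simp: blockdiag_def)

lemma linear_blockdiag_outer:
  assumes "Vector_Spaces.linear cscale cscale T"
  shows "Vector_Spaces.linear cscale cscale (\<lambda>X. blockdiag n m X 0 (T X))"
proof -
  interpret T: Vector_Spaces.linear cscale cscale T by fact
  show ?thesis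
  proof (rule cmat_linearI)
    show "blockdiag n m (X + X') 0 (T (X + X')) = blockdiag n m X 0 (T X) + blockdiag n m X' 0 (T X')"
      for X X'
      by (simp add: T.add fun_eq_iff blockdiag_def)
    show "blockdiag n m (cscale c X) 0 (T (cscale c X)) = cscale c (blockdiag n m X 0 (T X))" for c X
      by (simp add: T.scale fun_eq_iff blockdiag_def)
  qed
qed

lemma linear_blockdiag_middle: "Vector_Spaces.linear cscale cscale (\<lambda>Y. blockdiag n m 0 Y 0)"
  by (rule cmat_linearI) (simp_all add: fun_eq_iff blockdiag_def)

lemma cdim_blockdiag:
  assumes T: "Vector_Spaces.linear cscale cscale T"
  shows "cdim {blockdiag n m X Y (T X) | X Y. X \<in> kerB n (gl n) p \<and> Y \<in> kerB m (gl m) q}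
       = cdim (kerB n (gl n) p) + cdim (kerB m (gl m) q)"
proof -
  interpret T: Vector_Spaces.linear cscale cscale T by fact
  define L1 where "L1 X = blockdiag n m X 0 (T X)" for X
  define L2 where "L2 Y = blockdiag n m 0 Y 0" for Y
  have split: "blockdiag n m X Y (T X) = L1 X + L2 Y" for X Y
    by (simp add: fun_eq_iff blockdiag_def L1_def L2_def)
  have linear: "Vector_Spaces.linear cscale cscale L1" "Vector_Spaces.linear cscale cscale L2"
    unfolding L1_def[abs_def] L2_def[abs_def]
    by (rule linear_blockdiag_outer[OF T], rule linear_blockdiag_middle)
  have inj1: "inj_on L1 (gl n)"
  proof (rule inj_onI)
    fix X X' assume "X \<in> gl n" "X' \<in> gl n" and eq: "L1 X = L1 X'"
    have "X i j = X' i j" if "i \<in> {1..n}" "j \<in> {1..n}" for i j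
      using fun_cong[OF fun_cong[OF eq, of i], of j] that by (simp add: L1_def blockdiag_corner)
    with \<open>X \<in> gl n\<close> \<open>X' \<in> gl n\<close> show "X = X'"
      by (rule gl_eqI)
  qed
  have inj2: "inj_on L2 (gl m)"
  proof (rule inj_onI)
    fix Y Y' assume "Y \<in> gl m" "Y' \<in> gl m" and eq: "L2 Y = L2 Y'"
    have "Y i j = Y' i j" if "i \<in> {1..m}" "j \<in> {1..m}" for i j
      using fun_cong[OF fun_cong[OF eq, of "n+i"], of "n+j"] that by (simp add: L2_def blockdiag_middle)
    with \<open>Y \<in> gl m\<close> \<open>Y' \<in> gl m\<close> show "Y = Y'"
      by (rule gl_eqI)
  qed
  have disjoint: "L1 X = 0" if "X \<in> gl n" "L1 X + L2 Y = 0" for X Y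
  proof -
    have "X i j = (L1 X + L2 Y) i j" if "i \<in> {1..n}" "j \<in> {1..n}" for i j
      using that by (simp add: L1_def L2_def blockdiag_corner)
    with that have "X = 0"
      by (intro gl_eqI) (auto simp: gl_def)
    moreover have "L1 0 = 0"
      unfolding L1_def T.zero by (simp add: blockdiag_def fun_eq_iff)
    ultimately show ?thesis
      by simp
  qed
  have "cmat.dim {L1 X + L2 Y | X Y. X \<in> kerB n (gl n) p \<and> Y \<in> kerB m (gl m) q}
      = cmat.dim (kerB n (gl n) p) + cmat.dim (kerB m (gl m) q)"
  proof (rule cmat.dim_sum_images[OF linear subspace_kerB_gl _ _ subspace_kerB_gl])
    show "kerB n (gl n) p \<subseteq> cmat.span ((\<lambda>(i, j). estar i j) ` ({1..n} \<times> {1..n}))"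
      using kerB_subset_gl gl_subset_span_estar by (rule subset_trans)
    show "kerB m (gl m) q \<subseteq> cmat.span ((\<lambda>(i, j). estar i j) ` ({1..m} \<times> {1..m}))"
      using kerB_subset_gl gl_subset_span_estar by (rule subset_trans)
    show "inj_on L1 (kerB n (gl n) p)" "inj_on L2 (kerB m (gl m) q)"
      using inj_on_subset[OF inj1 kerB_subset_gl] inj_on_subset[OF inj2 kerB_subset_gl] .
    show "L1 X = 0" if "X \<in> kerB n (gl n) p" "L1 X + L2 Y = 0" for X Y
      using disjoint kerB_subset_gl that by blast
  qed simp_all
  then show ?thesis
    by (simp add: cdim_eq_dim split)
qed

lemma sum_if_eq_inverse:
  assumes "finite S"
    and "\<And>u. u \<in> S \<Longrightarrow> \<sigma> u \<in> B \<and> \<sigma>' (\<sigma> u) = u"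
    and "\<And>b. b \<in> B \<Longrightarrow> \<sigma>' b \<in> S \<and> \<sigma> (\<sigma>' b) = b"
  shows "(\<Sum>u\<in>S. if b = \<sigma> u then h u else 0) = (if b \<in> B then h (\<sigma>' b) else 0)"
proof (cases "b \<in> B")
  case True
  then have "(b = \<sigma> u) = (u = \<sigma>' b)" if "u \<in> S" for u
    using assms(2,3) that by metis
  with True assms show ?thesis
    by (simp cong: sum.cong)
next
  case False
  with assms(2) have "(\<Sum>u\<in>S. if b = \<sigma> u then h u else 0) = 0"
    by (intro sum.neutral) auto
  with False show ?thesis
    by simp
qed

definition transported :: "nat set \<Rightarrow> (nat \<Rightarrow> nat) \<Rightarrow> cmat \<Rightarrow> cmat" where
  "transported S \<sigma> c = (\<Sum>i\<in>S. \<Sum>j\<in>S. cscale (c i j) (estar (\<sigma> i) (\<sigma> j)))"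

lemma coad_transported:
  assumes "finite S" and "B \<subseteq> {1..N}"
    and \<sigma>: "\<And>u. u \<in> S \<Longrightarrow> \<sigma> u \<in> B \<and> \<sigma>' (\<sigma> u) = u"
    and \<sigma>': "\<And>b. b \<in> B \<Longrightarrow> \<sigma>' b \<in> S \<and> \<sigma> (\<sigma>' b) = b"
  shows "coad N (transported S \<sigma> c) x a b =
           (if b \<in> B then \<Sum>u\<in>S. c u (\<sigma>' b) * x (\<sigma> u) a else 0)
         - (if a \<in> B then \<Sum>v\<in>S. c (\<sigma>' a) v * x b (\<sigma> v) else 0)"
proof -
  have "\<sigma> u \<in> {1..N}" if "u \<in> S" for u
    using \<sigma> that assms(2) by blast
  then have "coad N (transported S \<sigma> c) x a b =
      (\<Sum>u\<in>S. \<Sum>v\<in>S. if b = \<sigma> v then c u v * x (\<sigma> u) a else 0)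
    - (\<Sum>u\<in>S. \<Sum>v\<in>S. if a = \<sigma> u then c u v * x b (\<sigma> v) else 0)"
    unfolding transported_def
    by (simp add: coad_sum coad_scale coad_estar right_diff_distrib sum_subtractf
        if_distrib[of "\<lambda>t. _ * t"] cong: if_cong)
  also have "\<dots> = (\<Sum>u\<in>S. \<Sum>v\<in>S. if b = \<sigma> v then c u v * x (\<sigma> u) a else 0)
    - (\<Sum>u\<in>S. if a = \<sigma> u then \<Sum>v\<in>S. c u v * x b (\<sigma> v) else 0)"
    by (intro arg_cong2[where f = "(-)"] sum.cong refl) auto
  also have "\<dots> = (if b \<in> B then \<Sum>u\<in>S. c u (\<sigma>' b) * x (\<sigma> u) a else 0)
         - (if a \<in> B then \<Sum>v\<in>S. c (\<sigma>' a) v * x b (\<sigma> v) else 0)"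
    using assms by (simp add: sum_if_eq_inverse[of S \<sigma> B \<sigma>'])
  finally show ?thesis .
qed

definition Phi_twist :: "nat \<Rightarrow> nat \<Rightarrow> cmat \<Rightarrow> cmat \<Rightarrow> (nat \<Rightarrow> nat) \<Rightarrow> cmat" where
  "Phi_twist n m p q \<rho> = transported {1..n} id p + transported {1..m} ((+) n) q
     + transported {1..n} \<rho> p + (\<Sum>i=1..n. estar (\<rho> i) i)"

lemma Phi_eq_Phi_twist: "Phi n m p q = Phi_twist n m p q ((+) (n+m))"
  by (simp add: Phi_def Phi_twist_def transported_def add.assoc)

lemma Phi_a_eq_Phi_twist: "Phi_a n m p q = Phi_twist n m p q (\<lambda>u. 2*n+m+1-u)"
  by (simp add: Phi_a_def Phi_twist_def transported_def)

locale seaweed_twist =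
  fixes n m :: nat and \<rho> \<rho>' :: "nat \<Rightarrow> nat"
  assumes twist: "\<And>u. u \<in> {1..n} \<Longrightarrow> \<rho> u \<in> {n+m+1..2*n+m} \<and> \<rho>' (\<rho> u) = u"
    and untwist: "\<And>a. a \<in> {n+m+1..2*n+m} \<Longrightarrow> \<rho>' a \<in> {1..n} \<and> \<rho> (\<rho>' a) = a"
begin

lemma coad_pairing:
  "coad (2*n+m) (\<Sum>i=1..n. estar (\<rho> i) i) x a b =
     (if b \<in> {1..n} then x (\<rho> b) a else 0) - (if a \<in> {n+m+1..2*n+m} then x b (\<rho>' a) else 0)"
proof -
  have "coad (2*n+m) (\<Sum>i=1..n. estar (\<rho> i) i) x a b
      = (\<Sum>i=1..n. (if b = i then x (\<rho> i) a else 0) - (if a = \<rho> i then x b i else 0))"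
    unfolding coad_sum
  proof (rule sum.cong[OF refl])
    fix i assume "i \<in> {1..n}"
    moreover from this have "\<rho> i \<in> {1..2*n+m}"
      using twist by force
    ultimately show "coad (2*n+m) (estar (\<rho> i) i) x a b
      = (if b = i then x (\<rho> i) a else 0) - (if a = \<rho> i then x b i else 0)"
      by (simp add: coad_estar)
  qed
  moreover have "(\<Sum>i=1..n. if a = \<rho> i then x b i else 0) =
      (if a \<in> {n+m+1..2*n+m} then x b (\<rho>' a) else 0)"
    by (rule sum_if_eq_inverse[OF _ twist untwist]) simp
  ultimately show ?thesis
    by (simp add: sum_subtractf)
qed

lemma coad_Phi_twist:
  "coad (2*n+m) (Phi_twist n m p q \<rho>) x a b =
     ((if b \<in> {1..n} then \<Sum>u=1..n. p u b * x u a else 0)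
      - (if a \<in> {1..n} then \<Sum>v=1..n. p a v * x b v else 0))
   + ((if b \<in> {n+1..n+m} then \<Sum>u=1..m. q u (b-n) * x (n+u) a else 0)
      - (if a \<in> {n+1..n+m} then \<Sum>v=1..m. q (a-n) v * x b (n+v) else 0))
   + ((if b \<in> {n+m+1..2*n+m} then \<Sum>u=1..n. p u (\<rho>' b) * x (\<rho> u) a else 0)
      - (if a \<in> {n+m+1..2*n+m} then \<Sum>v=1..n. p (\<rho>' a) v * x b (\<rho> v) else 0))
   + ((if b \<in> {1..n} then x (\<rho> b) a else 0)
      - (if a \<in> {n+m+1..2*n+m} then x b (\<rho>' a) else 0))"
proof -
  have p_block: "coad (2*n+m) (transported {1..n} id p) x a b =
      (if b \<in> {1..n} then \<Sum>u=1..n. p u b * x u a else 0)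
    - (if a \<in> {1..n} then \<Sum>v=1..n. p a v * x b v else 0)"
    using coad_transported[of "{1..n}" "{1..n}" "2*n+m" id id] by simp
  have q_block: "coad (2*n+m) (transported {1..m} ((+) n) q) x a b =
      (if b \<in> {n+1..n+m} then \<Sum>u=1..m. q u (b-n) * x (n+u) a else 0)
    - (if a \<in> {n+1..n+m} then \<Sum>v=1..m. q (a-n) v * x b (n+v) else 0)"
    by (rule coad_transported[where \<sigma>' = "\<lambda>b. b - n"]) auto
  have twisted_block: "coad (2*n+m) (transported {1..n} \<rho> p) x a b =
      (if b \<in> {n+m+1..2*n+m} then \<Sum>u=1..n. p u (\<rho>' b) * x (\<rho> u) a else 0)
    - (if a \<in> {n+m+1..2*n+m} then \<Sum>v=1..n. p (\<rho>' a) v * x b (\<rho> v) else 0)"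
    by (rule coad_transported[OF _ _ twist untwist]) auto
  show ?thesis
    unfolding Phi_twist_def coad_add coad_pairing p_block q_block twisted_block ..
qed

(* Premises in simp normal form, so that simp can discharge them under sums over {1..n}. *)
lemma twist_gt: "Suc 0 \<le> u \<Longrightarrow> u \<le> n \<Longrightarrow> n + m < \<rho> u"
  using twist[of u] by auto

context
  fixes Z assumes Z: "Z \<in> seaweed n m"
begin

lemma seaweed_upper_zero: "i \<le> n \<Longrightarrow> n < j \<Longrightarrow> Z i j = 0" "i \<le> n+m \<Longrightarrow> n+m < j \<Longrightarrow> Z i j = 0"
  using Z by (auto simp: seaweed_def)

lemmas block_simps = coad_Phi_twist seaweed_upper_zero twist_gt

lemma coad_Phi_twist_11:
  "a \<in> {1..n} \<Longrightarrow> b \<in> {1..n} \<Longrightarrow> coad (2*n+m) (Phi_twist n m p q \<rho>) Z a b =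
     (\<Sum>u=1..n. p u b * Z u a) - (\<Sum>v=1..n. p a v * Z b v) + Z (\<rho> b) a"
  by (simp add: block_simps)

lemma coad_Phi_twist_21:
  "a \<in> {n+1..n+m} \<Longrightarrow> b \<in> {1..n} \<Longrightarrow> coad (2*n+m) (Phi_twist n m p q \<rho>) Z a b = Z (\<rho> b) a"
  by (simp add: block_simps)

lemma coad_Phi_twist_22:
  "a \<in> {n+1..n+m} \<Longrightarrow> b \<in> {n+1..n+m} \<Longrightarrow> coad (2*n+m) (Phi_twist n m p q \<rho>) Z a b =
     (\<Sum>u=1..m. q u (b-n) * Z (n+u) a) - (\<Sum>v=1..m. q (a-n) v * Z b (n+v))"
  by (simp add: block_simps)

lemma coad_Phi_twist_31:
  "a \<in> {n+m+1..2*n+m} \<Longrightarrow> b \<in> {1..n} \<Longrightarrow> coad (2*n+m) (Phi_twist n m p q \<rho>) Z a b =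
     Z (\<rho> b) a - Z b (\<rho>' a)"
  by (simp add: block_simps)

lemma coad_Phi_twist_32:
  "a \<in> {n+m+1..2*n+m} \<Longrightarrow> b \<in> {n+1..n+m} \<Longrightarrow> coad (2*n+m) (Phi_twist n m p q \<rho>) Z a b =
     - Z b (\<rho>' a)"
  by (simp add: block_simps)

lemma coad_Phi_twist_33:
  "a \<in> {n+m+1..2*n+m} \<Longrightarrow> b \<in> {n+m+1..2*n+m} \<Longrightarrow> coad (2*n+m) (Phi_twist n m p q \<rho>) Z a b =
     (\<Sum>u=1..n. p u (\<rho>' b) * Z (\<rho> u) a) - (\<Sum>v=1..n. p (\<rho>' a) v * Z b (\<rho> v)) - Z b (\<rho>' a)"
  by (simp add: block_simps)

end

definition twist_block :: "cmat \<Rightarrow> cmat" where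
  "twist_block X = (\<lambda>i j. if i \<in> {1..n} \<and> j \<in> {1..n} then X (\<rho>' (n+m+i)) (\<rho>' (n+m+j)) else 0)"

lemma kerB_Phi_twist_iff:
  "Z \<in> kerB (2*n+m) (seaweed n m) (Phi_twist n m p q \<rho>) \<longleftrightarrow> Z \<in> seaweed n m \<and>
     (\<forall>a\<in>{1..2*n+m}. \<forall>b\<in>{1..2*n+m}. \<not> ((a \<le> n \<and> n < b) \<or> (a \<le> n+m \<and> n+m < b)) \<longrightarrow>
        coad (2*n+m) (Phi_twist n m p q \<rho>) Z a b = 0)"
  by (simp add: seaweed_eq_vanishing_on kerB_vanishing_on)

context
  fixes Z p q assumes Z_ker: "Z \<in> kerB (2*n+m) (seaweed n m) (Phi_twist n m p q \<rho>)"
begin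

lemma kerB_seaweed: "Z \<in> seaweed n m"
  using Z_ker by (simp add: kerB_Phi_twist_iff)

lemma kerB_coad_zero:
  "a \<in> {1..2*n+m} \<Longrightarrow> b \<in> {1..2*n+m} \<Longrightarrow> \<not> ((a \<le> n \<and> n < b) \<or> (a \<le> n+m \<and> n+m < b)) \<Longrightarrow>
    coad (2*n+m) (Phi_twist n m p q \<rho>) Z a b = 0"
  using Z_ker by (simp add: kerB_Phi_twist_iff)

lemma kerB_block_32_zero: "i \<in> {n+m+1..2*n+m} \<Longrightarrow> j \<in> {n+1..n+m} \<Longrightarrow> Z i j = 0"
  using kerB_coad_zero[of j "\<rho>' i"] coad_Phi_twist_21[OF kerB_seaweed, of j "\<rho>' i"] untwist[of i]
  by auto

lemma kerB_block_21_zero: "i \<in> {n+1..n+m} \<Longrightarrow> j \<in> {1..n} \<Longrightarrow> Z i j = 0"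
  using kerB_coad_zero[of "\<rho> j" i] coad_Phi_twist_32[OF kerB_seaweed, of "\<rho> j" i] twist[of j]
  by auto

lemma kerB_block_33_eq_11: "a \<in> {n+m+1..2*n+m} \<Longrightarrow> b \<in> {1..n} \<Longrightarrow> Z (\<rho> b) a = Z b (\<rho>' a)"
  using kerB_coad_zero[of a b] coad_Phi_twist_31[OF kerB_seaweed, of a b] by auto

lemma kerB_block_11_31:
  assumes a: "a \<in> {1..n}" and b: "b \<in> {1..n}"
  shows "(\<Sum>u=1..n. p u b * Z u a) - (\<Sum>v=1..n. p a v * Z b v) = 0 \<and> Z (\<rho> b) a = 0"
proof -
  let ?S = "(\<Sum>u=1..n. p u b * Z u a) - (\<Sum>v=1..n. p a v * Z b v)"
  have "?S + Z (\<rho> b) a = 0"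
    using kerB_coad_zero[of a b] coad_Phi_twist_11[OF kerB_seaweed a b] a b by simp
  moreover have "?S - Z (\<rho> b) a = 0" \<comment> \<open>the equation at (rho a, rho b)\<close>
  proof -
    have \<rho>a: "\<rho> a \<in> {n+m+1..2*n+m}" "\<rho>' (\<rho> a) = a" and \<rho>b: "\<rho> b \<in> {n+m+1..2*n+m}" "\<rho>' (\<rho> b) = b"
      using twist a b by auto
    have "Z (\<rho> u) (\<rho> v) = Z u v" if "u \<in> {1..n}" "v \<in> {1..n}" for u v
      using kerB_block_33_eq_11[of "\<rho> v" u] twist[of v] that by auto
    then have "(\<Sum>u=1..n. p u b * Z (\<rho> u) (\<rho> a)) = (\<Sum>u=1..n. p u b * Z u a)"
      and "(\<Sum>v=1..n. p a v * Z (\<rho> b) (\<rho> v)) = (\<Sum>v=1..n. p a v * Z b v)"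
      using a b by simp_all
    then show ?thesis
      using kerB_coad_zero[of "\<rho> a" "\<rho> b"] coad_Phi_twist_33[OF kerB_seaweed \<rho>a(1) \<rho>b(1)] \<rho>a \<rho>b
      by simp
  qed
  ultimately show ?thesis
    by (simp add: add_eq_0_iff)
qed

lemma kerB_Phi_twist_blockdiag:
  obtains X Y where "Z = blockdiag n m X Y (twist_block X)"
    and "X \<in> kerB n (gl n) p" and "Y \<in> kerB m (gl m) q"
proof
  define X where "X = (\<lambda>i j. if i \<in> {1..n} \<and> j \<in> {1..n} then Z i j else 0)"
  define Y where "Y = (\<lambda>i j. if i \<in> {1..m} \<and> j \<in> {1..m} then Z (n+i) (n+j) else 0)"
  show "X \<in> kerB n (gl n) p"
    unfolding kerB_gl_iff
  proof (intro conjI ballI)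
    show "X \<in> gl n" by (auto simp: X_def gl_def)
    fix a b assume "a \<in> {1..n}" "b \<in> {1..n}"
    then have "coad n p X a b = (\<Sum>u=1..n. p u b * Z u a) - (\<Sum>v=1..n. p a v * Z b v)"
      unfolding coad_def by (intro arg_cong2[where f = "(-)"] sum.cong) (auto simp: X_def)
    with kerB_block_11_31 show "coad n p X a b = 0"
      using \<open>a \<in> {1..n}\<close> \<open>b \<in> {1..n}\<close> by simp
  qed
  show "Y \<in> kerB m (gl m) q"
    unfolding kerB_gl_iff
  proof (intro conjI ballI)
    show "Y \<in> gl m" by (auto simp: Y_def gl_def)
    fix a b assume ab: "a \<in> {1..m}" "b \<in> {1..m}"
    then have "coad m q Y a b = (\<Sum>u=1..m. q u b * Z (n+u) (n+a)) - (\<Sum>v=1..m. q a v * Z (n+b) (n+v))"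
      unfolding coad_def by (intro arg_cong2[where f = "(-)"] sum.cong) (auto simp: Y_def)
    with ab show "coad m q Y a b = 0"
      using kerB_coad_zero[of "n+a" "n+b"] coad_Phi_twist_22[OF kerB_seaweed, of "n+a" "n+b"] by simp
  qed
  show "Z = blockdiag n m X Y (twist_block X)"
  proof (rule seaweed_eq_blockdiagI[OF kerB_seaweed])
    fix i j
    show "Z i j = X i j" if "i \<in> {1..n}" "j \<in> {1..n}"
      using that by (simp add: X_def)
    show "Z i j = Y (i-n) (j-n)" if "i \<in> {n+1..n+m}" "j \<in> {n+1..n+m}"
      using that by (auto simp: Y_def)
    show "Z i j = 0" if "i \<in> {n+1..n+m}" "j \<in> {1..n}"
      using kerB_block_21_zero that .
    show "Z i j = 0" if i: "i \<in> {n+m+1..2*n+m}" and j: "j \<in> {1..n+m}"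
    proof (cases "j \<le> n")
      case True
      then show ?thesis
        using kerB_block_11_31[of j "\<rho>' i"] untwist[OF i] j by auto
    next
      case False
      then show ?thesis
        using kerB_block_32_zero[OF i] j by auto
    qed
    show "Z i j = twist_block X (i-n-m) (j-n-m)" if i: "i \<in> {n+m+1..2*n+m}" and j: "j \<in> {n+m+1..2*n+m}"
      using kerB_block_33_eq_11[OF j, of "\<rho>' i"] untwist[OF i] untwist[OF j] i j
      by (auto simp: twist_block_def X_def)
  qed
qed

end

lemma blockdiag_twist_block_in_kerB:
  assumes X: "X \<in> kerB n (gl n) p" and Y: "Y \<in> kerB m (gl m) q"
  shows "blockdiag n m X Y (twist_block X) \<in> kerB (2*n+m) (seaweed n m) (Phi_twist n m p q \<rho>)"
proof -
  define Z where "Z = blockdiag n m X Y (twist_block X)"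
  have Z: "Z \<in> seaweed n m"
    by (auto simp: Z_def seaweed_def gl_def blockdiag_def)
  have Z11: "Z i j = X i j" if "i \<in> {1..n}" "j \<in> {1..n}" for i j
    using that by (simp add: Z_def blockdiag_def)
  have Z22: "Z i j = Y (i-n) (j-n)" if "i \<in> {n+1..n+m}" "j \<in> {n+1..n+m}" for i j
    using that by (auto simp: Z_def blockdiag_def)
  have Z33: "Z i j = X (\<rho>' i) (\<rho>' j)" if "i \<in> {n+m+1..2*n+m}" "j \<in> {n+m+1..2*n+m}" for i j
    using that by (auto simp: Z_def blockdiag_def twist_block_def)
  have Z_lower: "Z i j = 0" if "i \<in> {n+1..2*n+m}" "j \<in> {1..n+m}" "\<not> (i \<le> n+m \<and> n < j)" for i j
    using that by (auto simp: Z_def blockdiag_def)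
  have X0: "(\<Sum>u=1..n. p u b * X u a) - (\<Sum>v=1..n. p a v * X b v) = 0"
    if "a \<in> {1..n}" "b \<in> {1..n}" for a b
    using X that by (simp add: kerB_gl_iff coad_def)
  have Y0: "(\<Sum>u=1..m. q u b * Y u a) - (\<Sum>v=1..m. q a v * Y b v) = 0"
    if "a \<in> {1..m}" "b \<in> {1..m}" for a b
    using Y that by (simp add: kerB_gl_iff coad_def)
  have "coad (2*n+m) (Phi_twist n m p q \<rho>) Z a b = 0"
    if a: "a \<in> {1..2*n+m}" and b: "b \<in> {1..2*n+m}"
      and lower: "\<not> ((a \<le> n \<and> n < b) \<or> (a \<le> n+m \<and> n+m < b))" for a b
  proof -
    consider (11) "a \<in> {1..n}" "b \<in> {1..n}" | (21) "a \<in> {n+1..n+m}" "b \<in> {1..n}"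
      | (22) "a \<in> {n+1..n+m}" "b \<in> {n+1..n+m}" | (31) "a \<in> {n+m+1..2*n+m}" "b \<in> {1..n}"
      | (32) "a \<in> {n+m+1..2*n+m}" "b \<in> {n+1..n+m}" | (33) "a \<in> {n+m+1..2*n+m}" "b \<in> {n+m+1..2*n+m}"
      using a b lower by fastforce
    then show ?thesis
    proof cases
      case 11
      then show ?thesis
        using X0[OF 11] twist[of b] Z_lower[of "\<rho> b" a]
        by (simp add: coad_Phi_twist_11[OF Z] Z11)
    next
      case 21
      then show ?thesis
        using twist[of b] Z_lower[of "\<rho> b" a] by (simp add: coad_Phi_twist_21[OF Z])
    next
      case 22
      then have "a - n \<in> {1..m}" "b - n \<in> {1..m}"
        by auto
      with 22 show ?thesis
        using Y0 by (simp add: coad_Phi_twist_22[OF Z] Z22)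
    next
      case 31
      then show ?thesis
        using twist[of b] untwist[of a] by (simp add: coad_Phi_twist_31[OF Z] Z11 Z33)
    next
      case 32
      then show ?thesis
        using untwist[of a] Z_lower[of b "\<rho>' a"] by (simp add: coad_Phi_twist_32[OF Z])
    next
      case 33
      then show ?thesis
        using X0[of "\<rho>' a" "\<rho>' b"] untwist[of a] untwist[of b] twist Z_lower[of b "\<rho>' a"]
        by (simp add: coad_Phi_twist_33[OF Z] Z33)
    qed
  qed
  with Z show ?thesis
    by (simp add: Z_def [symmetric] kerB_Phi_twist_iff)
qed

lemma kerB_Phi_twist:
  "kerB (2*n+m) (seaweed n m) (Phi_twist n m p q \<rho>) =
     {blockdiag n m X Y (twist_block X) | X Y. X \<in> kerB n (gl n) p \<and> Y \<in> kerB m (gl m) q}"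
proof (intro set_eqI iffI)
  fix Z assume "Z \<in> kerB (2*n+m) (seaweed n m) (Phi_twist n m p q \<rho>)"
  then obtain X Y where "Z = blockdiag n m X Y (twist_block X)"
    and "X \<in> kerB n (gl n) p" "Y \<in> kerB m (gl m) q"
    by (rule kerB_Phi_twist_blockdiag)
  then show "Z \<in> {blockdiag n m X Y (twist_block X) | X Y. X \<in> kerB n (gl n) p \<and> Y \<in> kerB m (gl m) q}"
    by blast
qed (auto intro: blockdiag_twist_block_in_kerB)

lemma linear_twist_block: "Vector_Spaces.linear cscale cscale twist_block"
  by (rule cmat_linearI) (simp_all add: twist_block_def fun_eq_iff)

lemma cdim_kerB_Phi_twist:
  "cdim (kerB (2*n+m) (seaweed n m) (Phi_twist n m p q \<rho>)) = cdim (kerB n (gl n) p) + cdim (kerB m (gl m) q)"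
  unfolding kerB_Phi_twist by (rule cdim_blockdiag[OF linear_twist_block])

end

theorem mainTheorem14:
  fixes n m :: nat and p q :: cmat
  assumes "n \<ge> 1"
  shows "(kerB (2*n+m) (seaweed n m) (Phi n m p q) =
           {blockdiag n m X Y X | X Y. X \<in> kerB n (gl n) p \<and> Y \<in> kerB m (gl m) q}) \<and>
         (kerB (2*n+m) (seaweed n m) (Phi_a n m p q) =
           {blockdiag n m X Y (revm n X) | X Y. X \<in> kerB n (gl n) p \<and> Y \<in> kerB m (gl m) q}) \<and>
         (cdim (kerB (2*n+m) (seaweed n m) (Phi n m p q)) =
           cdim (kerB n (gl n) p) + cdim (kerB m (gl m) q)) \<and>
         (cdim (kerB (2*n+m) (seaweed n m) (Phi_a n m p q)) =
           cdim (kerB n (gl n) p) + cdim (kerB m (gl m) q))"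
proof -
  interpret shift: seaweed_twist n m "(+) (n+m)" "\<lambda>a. a - (n+m)"
    by unfold_locales auto
  interpret flip: seaweed_twist n m "\<lambda>u. 2*n+m+1-u" "\<lambda>a. 2*n+m+1-a"
    by unfold_locales auto
  have shift_twist_block: "shift.twist_block X = X" if "X \<in> gl n" for X
    using that by (auto simp: shift.twist_block_def gl_def fun_eq_iff)
  have flip_twist_block: "flip.twist_block = revm n"
    unfolding flip.twist_block_def revm_def by (auto simp: fun_eq_iff)
  have "kerB (2*n+m) (seaweed n m) (Phi n m p q) =
      {blockdiag n m X Y X | X Y. X \<in> kerB n (gl n) p \<and> Y \<in> kerB m (gl m) q}"
    unfolding Phi_eq_Phi_twist shift.kerB_Phi_twist using shift_twist_block kerB_subset_gl by force
  moreover have "kerB (2*n+m) (seaweed n m) (Phi_a n m p q) =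
      {blockdiag n m X Y (revm n X) | X Y. X \<in> kerB n (gl n) p \<and> Y \<in> kerB m (gl m) q}"
    unfolding Phi_a_eq_Phi_twist flip.kerB_Phi_twist flip_twist_block ..
  moreover have "cdim (kerB (2*n+m) (seaweed n m) (Phi n m p q)) =
      cdim (kerB n (gl n) p) + cdim (kerB m (gl m) q)"
    unfolding Phi_eq_Phi_twist by (rule shift.cdim_kerB_Phi_twist)
  moreover have "cdim (kerB (2*n+m) (seaweed n m) (Phi_a n m p q)) =
      cdim (kerB n (gl n) p) + cdim (kerB m (gl m) q)"
    unfolding Phi_a_eq_Phi_twist by (rule flip.cdim_kerB_Phi_twist)
  ultimately show ?thesis
    by blast
qed

end
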